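(* Let $p_{d,k,n}$ denote the number of directed plateau polyhypercubes of dimension $d$, width $k$ and lateral area $n$. Then for $d\geq 3$, $k\geq 1$ and $n\geq (d-1)k$, $$p_{d,k,n}=\binom{n+(d-1)k-d}{n-(d-1)k}.$$
   Context: Work in $\mathbb{Z}^d$ with orthonormal coordinate system $(0,\vec{i_1},\dots,\vec{i_d})$; a cell is a unit hypercube of the lattice. A polyhypercube of dimension $d$ is a finite union of cells, connected through their $(d-1)$-dimensional faces, defined up to translation. Its width is the number of distinct values of the $\vec{i_1}$-coordinate taken by its cells; its strata are its intersections with the layers of constant $\vec{i_1}$-coordinate. A plateau is a stratum that is a hyperrectangle. An elementary step is a positive move of one unit along one axis. A polyhypercube is directed if every cell can be reached from a distinguished root cell by a path of cells of the polyhypercube using only elementary steps. A directed plateau polyhypercube is a directed polyhypercube all of whose strata are plateaus. The lateral area of a polyhypercube is the sum, over $2\leq l\leq d$, of the areas (numbers of unit squares) of the polyominoes obtained by projecting it onto the planes $(\vec{i_1},\vec{i_l})$. *)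

theory Defs
  imports Main
begin

text \<open>Cells of the lattice Z^d are represented by their lower corner, an integer list of
length d. Index 0 is the coordinate along i_1; index l-1 is the coordinate along i_l.\<close>

definition cells :: "nat \<Rightarrow> int list set" where
  "cells d = {c. length c = d}"

definition face_adj :: "nat \<Rightarrow> int list \<Rightarrow> int list \<Rightarrow> bool" where
  "face_adj d a b \<longleftrightarrow> length a = d \<and> length b = d \<and>
     (\<exists>i<d. \<bar>a ! i - b ! i\<bar> = 1 \<and> (\<forall>j<d. j \<noteq> i \<longrightarrow> a ! j = b ! j))"

definition polyhypercube :: "nat \<Rightarrow> int list set \<Rightarrow> bool" where
  "polyhypercube d P \<longleftrightarrow> finite P \<and> P \<noteq> {} \<and> P \<subseteq> cells d \<and>
     (\<forall>a\<in>P. \<forall>b\<in>P. (a, b) \<in> {(x, y). x \<in> P \<and> y \<in> P \<and> face_adj d x y}\<^sup>*)"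

definition elem_step :: "nat \<Rightarrow> int list \<Rightarrow> int list \<Rightarrow> bool" where
  "elem_step d a b \<longleftrightarrow> length a = d \<and> (\<exists>i<d. b = a[i := a ! i + 1])"

definition directed :: "nat \<Rightarrow> int list \<Rightarrow> int list set \<Rightarrow> bool" where
  "directed d r P \<longleftrightarrow> r \<in> P \<and>
     (\<forall>c\<in>P. (r, c) \<in> {(x, y). x \<in> P \<and> y \<in> P \<and> elem_step d x y}\<^sup>*)"

definition directed_polyhypercube :: "nat \<Rightarrow> int list set \<Rightarrow> bool" where
  "directed_polyhypercube d P \<longleftrightarrow> polyhypercube d P \<and> (\<exists>r. directed d r P)"

definition width :: "int list set \<Rightarrow> nat" where
  "width P = card ((\<lambda>c. c ! 0) ` P)"

definition stratum :: "int list set \<Rightarrow> int \<Rightarrow> int list set" where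
  "stratum P x = {c \<in> P. c ! 0 = x}"

definition plateau :: "nat \<Rightarrow> int \<Rightarrow> int list set \<Rightarrow> bool" where
  "plateau d x S \<longleftrightarrow> S \<noteq> {} \<and> (\<exists>lo hi :: nat \<Rightarrow> int.
     S = {c. length c = d \<and> c ! 0 = x \<and> (\<forall>i. 1 \<le> i \<and> i < d \<longrightarrow> lo i \<le> c ! i \<and> c ! i \<le> hi i)})"

definition directed_plateau_polyhypercube :: "nat \<Rightarrow> int list set \<Rightarrow> bool" where
  "directed_plateau_polyhypercube d P \<longleftrightarrow> directed_polyhypercube d P \<and>
     (\<forall>x \<in> (\<lambda>c. c ! 0) ` P. plateau d x (stratum P x))"

text \<open>Lateral area: sum over l = 2..d of the areas of the projections on the planes (i_1, i_l).\<close>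
definition lateral_area :: "nat \<Rightarrow> int list set \<Rightarrow> nat" where
  "lateral_area d P = (\<Sum>l\<in>{1..<d}. card ((\<lambda>c. (c ! 0, c ! l)) ` P))"

definition translate :: "int list \<Rightarrow> int list \<Rightarrow> int list" where
  "translate v c = map2 (+) c v"

definition transl_rel :: "nat \<Rightarrow> (int list set \<times> int list set) set" where
  "transl_rel d = {(P, Q). \<exists>v. length v = d \<and> Q = translate v ` P}"

definition p_count :: "nat \<Rightarrow> nat \<Rightarrow> nat \<Rightarrow> nat" where
  "p_count d k n = card ({P. directed_plateau_polyhypercube d P \<and> width P = k \<and>
      lateral_area d P = n} // transl_rel d)"

end

theory Submission
  imports Defs
begin

text \<open>
  Translating the root of a directed polyhypercube to the origin picks exactly one member of each
  translation class, because a set of cells directed from the origin has nonnegative coordinates.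
  A directed plateau polyhypercube rooted at the origin with width k has its strata at the
  abscissas 0, ..., k - 1, and in every transverse direction l the intervals [lo j, hi j] spanned
  by the strata satisfy lo 0 = 0 and lo j \<le> lo (j + 1) \<le> hi j: the lowest corner of a
  stratum can only be entered by a step along the first axis. Conversely, these constraints
  define a directed plateau polyhypercube. Such a column of intervals is encoded by 2k - 1 free
  natural numbers, the shifts lo (j + 1) - lo j and the overhangs hi j - lo (j + 1) (with
  hi (k - 1) - lo (k - 1) last), and the area of the projection on the plane (i_1, i_l) is k
  plus their sum. So the polyhypercubes of lateral area n correspond to the weak compositions of
  n - (d - 1) k into (d - 1)(2k - 1) parts, which are counted by the binomial coefficient.
\<close>

section \<open>Weak compositions\<close>

definition weak_compositions :: "'a set \<Rightarrow> nat \<Rightarrow> ('a \<Rightarrow> nat) set" where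
  "weak_compositions I N = {f. (\<forall>x. x \<notin> I \<longrightarrow> f x = 0) \<and> sum f I = N}"

lemma card_weak_compositions:
  assumes "finite I"
  shows "card (weak_compositions I N) = (N + card I - 1) choose N"
proof -
  let ?m = "card I"
  obtain h where h: "bij_betw h {0..<?m} I"
    using ex_bij_betw_nat_finite[OF assms] by blast
  let ?h' = "inv_into {0..<?m} h"
  have "bij_betw (\<lambda>f. map (f \<circ> h) [0..<?m]) (weak_compositions I N)
          {xs. length xs = ?m \<and> sum_list xs = N}"
  proof (rule bij_betw_byWitness[where f' = "\<lambda>xs x. if x \<in> I then xs ! ?h' x else 0"])
    show "\<forall>f\<in>weak_compositions I N. (\<lambda>x. if x \<in> I then map (f \<circ> h) [0..<?m] ! ?h' x else 0) = f"
    proof (intro ballI ext)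
      fix f x assume "f \<in> weak_compositions I N"
      moreover have "map (f \<circ> h) [0..<?m] ! ?h' x = f x" if "x \<in> I"
        using bij_betw_apply[OF bij_betw_inv_into[OF h] that] bij_betw_inv_into_right[OF h that]
        by simp
      ultimately show "(if x \<in> I then map (f \<circ> h) [0..<?m] ! ?h' x else 0) = f x"
        by (simp add: weak_compositions_def)
    qed
    show "\<forall>xs\<in>{xs. length xs = ?m \<and> sum_list xs = N}.
            map ((\<lambda>x. if x \<in> I then xs ! ?h' x else 0) \<circ> h) [0..<?m] = xs"
      using h by (auto simp: bij_betw_def intro!: nth_equalityI)
    have "sum f I = sum_list (map (f \<circ> h) [0..<?m])" for f :: "_ \<Rightarrow> nat"
      using sum.reindex_bij_betw[OF h, of f] by (simp add: sum_list_sum_nth atLeast0LessThan)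
    then show "(\<lambda>f. map (f \<circ> h) [0..<?m]) ` weak_compositions I N
               \<subseteq> {xs. length xs = ?m \<and> sum_list xs = N}"
      by (auto simp: weak_compositions_def)
    have "sum (\<lambda>x. if x \<in> I then xs ! ?h' x else 0) I = sum ((!) xs) {0..<?m}" for xs :: "nat list"
      using sum.reindex_bij_betw[OF bij_betw_inv_into[OF h], of "(!) xs"] by simp
    then show "(\<lambda>xs x. if x \<in> I then xs ! ?h' x else 0) ` {xs. length xs = ?m \<and> sum_list xs = N}
               \<subseteq> weak_compositions I N"
      by (auto simp: weak_compositions_def sum_list_sum_nth atLeast0LessThan)
  qed
  then show ?thesis
    by (simp add: bij_betw_same_card card_length_sum_list)
qed

section \<open>Hyperrectangles\<close>

definition hyperrect :: "nat \<Rightarrow> int \<Rightarrow> (nat \<Rightarrow> int) \<Rightarrow> (nat \<Rightarrow> int) \<Rightarrow> int list set" where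
  "hyperrect d x lo hi =
     {c. length c = d \<and> c ! 0 = x \<and> (\<forall>i. 1 \<le> i \<and> i < d \<longrightarrow> lo i \<le> c ! i \<and> c ! i \<le> hi i)}"

definition mk_cell :: "nat \<Rightarrow> int \<Rightarrow> (nat \<Rightarrow> int) \<Rightarrow> int list" where
  "mk_cell d x b = x # map b [1..<d]"

lemma length_mk_cell [simp]: "0 < d \<Longrightarrow> length (mk_cell d x b) = d"
  by (simp add: mk_cell_def)

lemma nth_mk_cell [simp]: "i < d \<Longrightarrow> mk_cell d x b ! i = (if i = 0 then x else b i)"
  by (cases i) (simp_all add: mk_cell_def)

lemma mk_cell_origin: "0 < d \<Longrightarrow> mk_cell d 0 (\<lambda>_. 0) = replicate d 0"
  by (intro nth_equalityI) simp_all

lemma plateau_iff_hyperrect: "plateau d x S \<longleftrightarrow> S \<noteq> {} \<and> (\<exists>lo hi. S = hyperrect d x lo hi)"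
  unfolding plateau_def hyperrect_def by simp

lemma mk_cell_in_hyperrect:
  assumes "0 < d" "\<And>i. 1 \<le> i \<Longrightarrow> i < d \<Longrightarrow> lo i \<le> b i \<and> b i \<le> hi i"
  shows "mk_cell d x b \<in> hyperrect d x lo hi"
  using assms by (simp add: hyperrect_def)

lemma hyperrect_nonempty_iff:
  assumes "0 < d"
  shows "hyperrect d x lo hi \<noteq> {} \<longleftrightarrow> (\<forall>i. 1 \<le> i \<and> i < d \<longrightarrow> lo i \<le> hi i)"
proof
  assume "hyperrect d x lo hi \<noteq> {}"
  then show "\<forall>i. 1 \<le> i \<and> i < d \<longrightarrow> lo i \<le> hi i"
    by (force simp: hyperrect_def)
next
  assume "\<forall>i. 1 \<le> i \<and> i < d \<longrightarrow> lo i \<le> hi i"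
  then have "mk_cell d x lo \<in> hyperrect d x lo hi"
    using assms by (intro mk_cell_in_hyperrect) auto
  then show "hyperrect d x lo hi \<noteq> {}" by auto
qed

lemma hyperrect_subset_bounds:
  assumes "0 < d" "hyperrect d x lo hi \<subseteq> hyperrect d x lo' hi'" "hyperrect d x lo hi \<noteq> {}"
    and "1 \<le> l" "l < d"
  shows "lo' l \<le> lo l \<and> hi l \<le> hi' l"
proof -
  have "mk_cell d x lo \<in> hyperrect d x lo hi" "mk_cell d x hi \<in> hyperrect d x lo hi"
    using assms(1,3) by (auto intro!: mk_cell_in_hyperrect simp: hyperrect_nonempty_iff)
  then have "mk_cell d x lo \<in> hyperrect d x lo' hi'" "mk_cell d x hi \<in> hyperrect d x lo' hi'"
    using assms(2) by auto
  then show ?thesis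
    using assms(4,5) by (auto simp: hyperrect_def)
qed

lemma hyperrect_eq_bounds:
  assumes "0 < d" "hyperrect d x lo hi = hyperrect d x lo' hi'" "hyperrect d x lo hi \<noteq> {}"
    and "1 \<le> l" "l < d"
  shows "lo l = lo' l \<and> hi l = hi' l"
  using hyperrect_subset_bounds[OF assms(1) equalityD1[OF assms(2)] assms(3-5)]
    hyperrect_subset_bounds[OF assms(1) equalityD2[OF assms(2)] _ assms(4-5)] assms(2,3)
  by fastforce

lemma hyperrect_cong:
  "(\<And>l. 1 \<le> l \<Longrightarrow> l < d \<Longrightarrow> lo l = lo' l \<and> hi l = hi' l) \<Longrightarrow>
    hyperrect d x lo hi = hyperrect d x lo' hi'"
  unfolding hyperrect_def by auto

lemma finite_hyperrect: "finite (hyperrect d x lo hi)"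
proof (rule finite_subset)
  show "hyperrect d x lo hi \<subseteq> {c. set c \<subseteq> insert x (\<Union>i<d. {lo i..hi i}) \<and> length c = d}"
  proof
    fix c assume c: "c \<in> hyperrect d x lo hi"
    have "set c \<subseteq> insert x (\<Union>i<d. {lo i..hi i})"
    proof
      fix y assume "y \<in> set c"
      then obtain i where "i < d" "y = c ! i"
        using c by (auto simp: hyperrect_def in_set_conv_nth)
      then have "y = x \<or> y \<in> {lo i..hi i}"
        using c by (cases "i = 0") (simp_all add: hyperrect_def)
      then show "y \<in> insert x (\<Union>i<d. {lo i..hi i})"
        using \<open>i < d\<close> by blast
    qed
    then show "c \<in> {c. set c \<subseteq> insert x (\<Union>i<d. {lo i..hi i}) \<and> length c = d}"
      using c by (simp add: hyperrect_def)
  qed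
  show "finite {c. set c \<subseteq> insert x (\<Union>i<d. {lo i..hi i}) \<and> length c = d}"
    by (rule finite_lists_length_eq) auto
qed

lemma hyperrect_order_convex:
  assumes "a \<in> hyperrect d x lo hi" "c \<in> hyperrect d x lo hi"
    and "length y = d" "\<forall>i<d. a ! i \<le> y ! i \<and> y ! i \<le> c ! i"
  shows "y \<in> hyperrect d x lo hi"
proof -
  have "a ! i \<le> y ! i" "y ! i \<le> c ! i" if "i < d" for i
    using assms(4) that by simp_all
  moreover have "y = a" if "d = 0"
    using assms(1,3) that by (simp add: hyperrect_def)
  ultimately show ?thesis
    using assms(1-3) unfolding hyperrect_def by (fastforce intro: order_trans)
qed

lemma abscissas_hyperrect:
  assumes "0 < d" "hyperrect d x lo hi \<noteq> {}"
  shows "(\<lambda>c. c ! 0) ` hyperrect d x lo hi = {x}"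
  using assms by (auto simp: hyperrect_def)

lemma projection_hyperrect:
  assumes "1 \<le> l" "l < d" "hyperrect d x lo hi \<noteq> {}"
  shows "(\<lambda>c. (c ! 0, c ! l)) ` hyperrect d x lo hi = {x} \<times> {lo l..hi l}"
proof
  show "(\<lambda>c. (c ! 0, c ! l)) ` hyperrect d x lo hi \<subseteq> {x} \<times> {lo l..hi l}"
    using assms(1,2) by (auto simp: hyperrect_def)
  show "{x} \<times> {lo l..hi l} \<subseteq> (\<lambda>c. (c ! 0, c ! l)) ` hyperrect d x lo hi"
  proof clarify
    fix t assume t: "t \<in> {lo l..hi l}"
    have "mk_cell d x (lo(l := t)) \<in> hyperrect d x lo hi"
      using assms t by (intro mk_cell_in_hyperrect) (auto simp: hyperrect_nonempty_iff)
    moreover have "(x, t) = (mk_cell d x (lo(l := t)) ! 0, mk_cell d x (lo(l := t)) ! l)"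
      using assms(1,2) by simp
    ultimately show "(x, t) \<in> (\<lambda>c. (c ! 0, c ! l)) ` hyperrect d x lo hi"
      by blast
  qed
qed

section \<open>Directed sets of cells\<close>

definition steps :: "nat \<Rightarrow> int list set \<Rightarrow> (int list \<times> int list) set" where
  "steps d P = {(x, y). x \<in> P \<and> y \<in> P \<and> elem_step d x y}"

lemma directed_iff_steps: "directed d r P \<longleftrightarrow> r \<in> P \<and> (\<forall>c\<in>P. (r, c) \<in> (steps d P)\<^sup>*)"
  by (simp add: directed_def steps_def)

lemma rtrancl_steps_le:
  assumes "(a, b) \<in> (steps d P)\<^sup>*" "length a = d"
  shows "length b = d \<and> (\<forall>i<d. a ! i \<le> b ! i)"
  using assms(1)
proof (induction rule: rtrancl_induct)
  case base
  then show ?case using assms(2) by simp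
next
  case (step y z)
  then obtain j where "j < d" "z = y[j := y ! j + 1]" "length y = d"
    by (auto simp: steps_def elem_step_def)
  then have "length z = d \<and> (\<forall>i<d. y ! i \<le> z ! i)"
    by (simp add: nth_list_update)
  then show ?case using step.IH by fastforce
qed

lemma rtrancl_steps_if_interval_subset:
  assumes "length a = d" "length c = d" "\<forall>i<d. a ! i \<le> c ! i"
    and "\<And>y. length y = d \<Longrightarrow> \<forall>i<d. a ! i \<le> y ! i \<and> y ! i \<le> c ! i \<Longrightarrow> y \<in> P"
  shows "(a, c) \<in> (steps d P)\<^sup>*"
  using assms
proof (induction "\<Sum>i<d. nat (c ! i - a ! i)" arbitrary: a rule: less_induct)
  case (less a)
  show ?case
  proof (cases "\<forall>i<d. a ! i = c ! i")
    case True
    then have "a = c" using less.prems(1,2) by (simp add: nth_equalityI)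
    then show ?thesis by simp
  next
    case False
    then obtain j where j: "j < d" "a ! j < c ! j"
      using less.prems(3) by force
    define a' where "a' = a[j := a ! j + 1]"
    have a'_nth: "a' ! i = (if i = j then a ! i + 1 else a ! i)" if "i < d" for i
      using that less.prems(1) by (simp add: a'_def nth_list_update)
    have "length a' = d" "\<forall>i<d. a' ! i \<le> c ! i"
      using less.prems(1,3) j a'_nth by (auto simp: a'_def)
    moreover have a'_P: "y \<in> P" if "length y = d" "\<forall>i<d. a' ! i \<le> y ! i \<and> y ! i \<le> c ! i" for y
      using that a'_nth less.prems(4) by (smt (verit))
    moreover have "(\<Sum>i<d. nat (c ! i - a' ! i)) < (\<Sum>i<d. nat (c ! i - a ! i))"
      by (rule sum_strict_mono_ex1) (use a'_nth j in auto)
    ultimately have "(a', c) \<in> (steps d P)\<^sup>*"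
      using less.hyps less.prems(2) by blast
    moreover have "(a, a') \<in> steps d P"
      using less.prems a'_P j \<open>\<forall>i<d. a' ! i \<le> c ! i\<close> \<open>length a' = d\<close> a'_nth
      by (auto simp: steps_def elem_step_def a'_def)
    ultimately show ?thesis
      by (blast intro: converse_rtrancl_into_rtrancl)
  qed
qed

lemma polyhypercube_if_directed:
  assumes "directed d r P" "finite P" "P \<subseteq> cells d"
  shows "polyhypercube d P"
proof -
  let ?F = "{(x, y). x \<in> P \<and> y \<in> P \<and> face_adj d x y}"
  have "steps d P \<subseteq> ?F"
    by (auto simp: steps_def elem_step_def face_adj_def nth_list_update)
  then have from_root: "(r, c) \<in> ?F\<^sup>*" if "c \<in> P" for c
    using assms(1) that rtrancl_mono[of "steps d P" ?F] by (auto simp: directed_iff_steps)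
  have "?F\<inverse> = ?F"
    by (auto simp: face_adj_def abs_minus_commute)
  then have "(a, b) \<in> ?F\<^sup>*" if "a \<in> P" "b \<in> P" for a b
  proof -
    have "(a, r) \<in> (?F\<inverse>)\<^sup>*"
      using from_root[OF that(1)] by (rule rtrancl_converseI)
    then show ?thesis
      using from_root[OF that(2)] \<open>?F\<inverse> = ?F\<close> by (simp add: rtrancl_trans)
  qed
  then show ?thesis
    using assms by (auto simp: polyhypercube_def directed_def)
qed

lemma abscissas_directed:
  assumes "0 < d" "directed d r P" "finite P" "P \<subseteq> cells d"
  shows "(\<lambda>c. c ! 0) ` P = {r ! 0..<r ! 0 + int (width P)}"
proof -
  let ?X = "(\<lambda>c. c ! 0) ` P"
  have r: "r \<in> P" "length r = d"
    using assms(2,4) by (auto simp: directed_def cells_def)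
  have "{r ! 0..c ! 0} \<subseteq> ?X" if "(r, c) \<in> (steps d P)\<^sup>*" for c
    using that
  proof (induction rule: rtrancl_induct)
    case base
    then show ?case using r by auto
  next
    case (step y z)
    then obtain j where "j < d" "z = y[j := y ! j + 1]" "length y = d" "z \<in> P"
      by (auto simp: steps_def elem_step_def)
    then have "z ! 0 \<le> y ! 0 + 1"
      using assms(1) by (auto simp: nth_list_update)
    then have "{r ! 0..z ! 0} \<subseteq> {r ! 0..y ! 0} \<union> {z ! 0}"
      by auto
    moreover have "z ! 0 \<in> ?X"
      using \<open>z \<in> P\<close> by blast
    ultimately show ?case using step.IH by blast
  qed
  moreover have "r ! 0 \<le> c ! 0" if "(r, c) \<in> (steps d P)\<^sup>*" for c
    using rtrancl_steps_le[OF that r(2)] assms(1) by blast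
  ultimately have down_closed: "{r ! 0..x} \<subseteq> ?X" "r ! 0 \<le> x" if "x \<in> ?X" for x
    using that assms(2) by (auto simp: directed_iff_steps)
  have "?X \<subseteq> {r ! 0..<r ! 0 + int (card ?X)}"
  proof
    fix x assume "x \<in> ?X"
    then have "card {r ! 0..x} \<le> card ?X" "r ! 0 \<le> x"
      using down_closed[of x] assms(3) by (simp_all only: card_mono finite_imageI)
    then show "x \<in> {r ! 0..<r ! 0 + int (card ?X)}" by simp
  qed
  then show ?thesis
    unfolding width_def using assms(3) by (intro card_subset_eq) auto
qed

lemma nonneg_if_directed_from_origin:
  assumes "directed d (replicate d 0) P" "c \<in> P" "i < d"
  shows "0 \<le> c ! i"
  using rtrancl_steps_le[of "replicate d 0" c d P] assms by (simp add: directed_iff_steps)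

lemma elem_step_mk_cell: "0 < d \<Longrightarrow> elem_step d (mk_cell d x b) (mk_cell d (x + 1) b)"
  unfolding elem_step_def by (auto simp: mk_cell_def intro!: exI[of _ 0])

lemma rtrancl_steps_in_hyperrect:
  assumes "hyperrect d x lo hi \<subseteq> P" "a \<in> hyperrect d x lo hi" "c \<in> hyperrect d x lo hi"
    and "\<forall>i<d. a ! i \<le> c ! i"
  shows "(a, c) \<in> (steps d P)\<^sup>*"
proof (rule rtrancl_steps_if_interval_subset)
  show "length a = d" "length c = d"
    using assms(2,3) by (simp_all add: hyperrect_def)
  show "y \<in> P" if "length y = d" "\<forall>i<d. a ! i \<le> y ! i \<and> y ! i \<le> c ! i" for y
    using hyperrect_order_convex[OF assms(2,3) that] assms(1) by blast
qed (fact assms(4))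

text \<open>A transverse step into the lowest corner of stratum x + 1 would start below that corner
  inside the same stratum, so the corner is entered along the first axis from stratum x.\<close>

lemma directed_strata_interlace:
  assumes "0 < d" "directed d r P"
    and "stratum P x = hyperrect d x lo hi" "stratum P (x + 1) = hyperrect d (x + 1) lo' hi'"
    and "mk_cell d (x + 1) lo' \<in> P" "mk_cell d (x + 1) lo' \<noteq> r" "1 \<le> l" "l < d"
  shows "lo l \<le> lo' l \<and> lo' l \<le> hi l"
proof -
  let ?a = "mk_cell d (x + 1) lo'"
  have "(r, ?a) \<in> (steps d P)\<^sup>*"
    using assms(2,5) by (simp add: directed_iff_steps)
  then obtain y where "(y, ?a) \<in> steps d P"
    using assms(6) by (blast elim: rtranclE)
  then obtain i where y: "y \<in> P" "length y = d" "i < d" "?a = y[i := y ! i + 1]"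
    by (auto simp: steps_def elem_step_def)
  then have a_nth: "?a ! m = (if m = i then y ! m + 1 else y ! m)" if "m < d" for m
    using that by (simp add: nth_list_update)
  have "i = 0"
  proof (rule ccontr)
    assume "i \<noteq> 0"
    then have "y ! 0 = x + 1"
      using a_nth[of 0] assms(1) by simp
    then have "y \<in> stratum P (x + 1)"
      using y(1) by (simp add: stratum_def)
    then have "lo' i \<le> y ! i"
      using assms(4) y(3) \<open>i \<noteq> 0\<close> by (simp add: hyperrect_def)
    then show False
      using a_nth[of i] y(3) \<open>i \<noteq> 0\<close> by simp
  qed
  then have "y ! 0 = x"
    using a_nth[of 0] assms(1) by simp
  then have "y \<in> stratum P x"
    using y(1) by (simp add: stratum_def)
  then have "y \<in> hyperrect d x lo hi"
    using assms(3) by simp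
  moreover have "y ! l = lo' l"
    using a_nth[of l] \<open>i = 0\<close> assms(7,8) by simp
  ultimately show ?thesis
    using assms(7,8) by (auto simp: hyperrect_def)
qed

lemma directed_from_origin_stratum_0:
  assumes "0 < d" "directed d (replicate d 0) P" "stratum P 0 = hyperrect d 0 lo hi"
    and "1 \<le> l" "l < d"
  shows "lo l = 0"
proof -
  have origin: "replicate d 0 \<in> hyperrect d 0 lo hi"
    using assms(1-3) by (auto simp: directed_def stratum_def)
  then have "lo l \<le> 0"
    using assms(4,5) by (simp add: hyperrect_def)
  have "\<forall>i. 1 \<le> i \<and> i < d \<longrightarrow> lo i \<le> hi i"
    using origin hyperrect_nonempty_iff[OF assms(1)] by blast
  then have "mk_cell d 0 lo \<in> hyperrect d 0 lo hi"
    using assms(1) by (intro mk_cell_in_hyperrect) auto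
  then have "mk_cell d 0 lo \<in> P"
    using assms(3) unfolding stratum_def by blast
  with \<open>lo l \<le> 0\<close> show ?thesis
    using nonneg_if_directed_from_origin[OF assms(2), of "mk_cell d 0 lo" l] assms(4,5) by simp
qed

lemma directed_plateau_strata:
  assumes "0 < d" "directed_plateau_polyhypercube d P" "directed d (replicate d 0) P"
  obtains lo hi :: "nat \<Rightarrow> nat \<Rightarrow> int" where
    "P = (\<Union>j<width P. hyperrect d (int j) (lo j) (hi j))"
    "\<And>l. 1 \<le> l \<Longrightarrow> l < d \<Longrightarrow> lo 0 l = 0"
    "\<And>j l. j < width P \<Longrightarrow> 1 \<le> l \<Longrightarrow> l < d \<Longrightarrow> lo j l \<le> hi j l"
    "\<And>j l. Suc j < width P \<Longrightarrow> 1 \<le> l \<Longrightarrow> l < d \<Longrightarrow>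
      lo j l \<le> lo (Suc j) l \<and> lo (Suc j) l \<le> hi j l"
proof -
  let ?k = "width P"
  have P: "finite P" "P \<subseteq> cells d"
    using assms(2) by (auto simp: directed_plateau_polyhypercube_def directed_polyhypercube_def polyhypercube_def)
  have abscissas: "(\<lambda>c. c ! 0) ` P = int ` {..<?k}"
    using abscissas_directed[OF assms(1,3) P] assms(1) by (simp add: image_int_atLeastLessThan flip: atLeast0LessThan)
  have "\<exists>lo hi. stratum P (int j) = hyperrect d (int j) lo hi \<and> stratum P (int j) \<noteq> {}"
    if "j < ?k" for j
    using assms(2) abscissas that by (auto simp: directed_plateau_polyhypercube_def plateau_iff_hyperrect)
  then obtain lo hi
    where strata: "\<And>j. j < ?k \<Longrightarrow> stratum P (int j) = hyperrect d (int j) (lo j) (hi j)"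
    and nonempty: "\<And>j. j < ?k \<Longrightarrow> stratum P (int j) \<noteq> {}"
    by metis
  have "P = (\<Union>j<?k. stratum P (int j))"
    using abscissas by (force simp: stratum_def)
  then have union: "P = (\<Union>j<?k. hyperrect d (int j) (lo j) (hi j))"
    using strata by simp
  have "0 < ?k"
    using abscissas assms(3) by (auto simp: directed_def)
  then have lo_0: "lo 0 l = 0" if "1 \<le> l" "l < d" for l
    using directed_from_origin_stratum_0[OF assms(1,3) _ that] strata[of 0] by simp
  have le: "lo j l \<le> hi j l" if "j < ?k" "1 \<le> l" "l < d" for j l
    using nonempty[OF that(1)] strata[OF that(1)] hyperrect_nonempty_iff[OF assms(1)] that(2,3) by simp
  have chain: "lo j l \<le> lo (Suc j) l \<and> lo (Suc j) l \<le> hi j l" if "Suc j < ?k" "1 \<le> l" "l < d" for j l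
  proof (rule directed_strata_interlace[OF assms(1,3)])
    show "stratum P (int j) = hyperrect d (int j) (lo j) (hi j)"
      "stratum P (int j + 1) = hyperrect d (int j + 1) (lo (Suc j)) (hi (Suc j))"
      using strata[of j] strata[of "Suc j"] that(1) by (simp_all add: add.commute)
    have "mk_cell d (int (Suc j)) (lo (Suc j)) \<in> stratum P (int (Suc j))"
      using strata[OF that(1)] le[OF that(1)] assms(1) by (auto intro: mk_cell_in_hyperrect)
    then show "mk_cell d (int j + 1) (lo (Suc j)) \<in> P"
      by (simp add: stratum_def add.commute)
    show "mk_cell d (int j + 1) (lo (Suc j)) \<noteq> replicate d 0"
      using assms(1) by (auto dest: arg_cong[of _ _ "\<lambda>c. c ! 0"])
  qed (use that in auto)
  show thesis
    by (rule that[OF union lo_0 le chain])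
qed

section \<open>Translations\<close>

lemma length_translate [simp]: "length (translate v c) = min (length c) (length v)"
  by (simp add: translate_def)

lemma nth_translate [simp]:
  "i < length c \<Longrightarrow> i < length v \<Longrightarrow> translate v c ! i = c ! i + v ! i"
  by (simp add: translate_def)

lemma translate_translate:
  "length v = length c \<Longrightarrow> length w = length c \<Longrightarrow>
    translate w (translate v c) = translate (map2 (+) v w) c"
  by (intro nth_equalityI) simp_all

lemma translate_replicate_zero: "length c = d \<Longrightarrow> translate (replicate d 0) c = c"
  by (intro nth_equalityI) simp_all

lemma image_translate_replicate_zero: "P \<subseteq> cells d \<Longrightarrow> translate (replicate d 0) ` P = P"
  by (auto simp: cells_def subset_iff translate_replicate_zero image_iff)

lemma translate_uminus: "length v = length c \<Longrightarrow> translate v (translate (map uminus v) c) = c"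
  by (intro nth_equalityI) simp_all

lemma elem_step_translate:
  assumes "length v = d" "elem_step d a b"
  shows "elem_step d (translate v a) (translate v b)"
proof -
  obtain i where i: "length a = d" "i < d" "b = a[i := a ! i + 1]"
    using assms(2) unfolding elem_step_def by blast
  then have "translate v b = (translate v a)[i := translate v a ! i + 1]"
    using assms(1) by (intro nth_equalityI) (auto simp: nth_list_update)
  then show ?thesis
    unfolding elem_step_def using i assms(1) by auto
qed

lemma directed_translate:
  assumes "length v = d" "directed d r P"
  shows "directed d (translate v r) (translate v ` P)"
  unfolding directed_iff_steps
proof (intro conjI ballI)
  show "translate v r \<in> translate v ` P"
    using assms(2) by (simp add: directed_def)
  fix c' assume "c' \<in> translate v ` P"
  then obtain c where c: "c \<in> P" "c' = translate v c" by auto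
  have "(r, c) \<in> (steps d P)\<^sup>*"
    using assms(2) c(1) by (simp add: directed_iff_steps)
  then show "(translate v r, c') \<in> (steps d (translate v ` P))\<^sup>*"
    unfolding c(2)
  proof (induction rule: rtrancl_induct)
    case (step y z)
    then have "(translate v y, translate v z) \<in> steps d (translate v ` P)"
      using elem_step_translate[OF assms(1)] by (auto simp: steps_def)
    then show ?case using step.IH by (rule rtrancl_into_rtrancl[rotated])
  qed simp
qed

lemma hyperrect_translate:
  assumes "length v = d" "0 < d"
  shows "translate v ` hyperrect d x lo hi =
    hyperrect d (x + v ! 0) (\<lambda>i. lo i + v ! i) (\<lambda>i. hi i + v ! i)"
proof
  show "translate v ` hyperrect d x lo hi \<subseteq> hyperrect d (x + v ! 0) (\<lambda>i. lo i + v ! i) (\<lambda>i. hi i + v ! i)"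
    using assms by (auto simp: hyperrect_def)
  show "hyperrect d (x + v ! 0) (\<lambda>i. lo i + v ! i) (\<lambda>i. hi i + v ! i) \<subseteq> translate v ` hyperrect d x lo hi"
  proof
    fix c assume c: "c \<in> hyperrect d (x + v ! 0) (\<lambda>i. lo i + v ! i) (\<lambda>i. hi i + v ! i)"
    then have "translate (map uminus v) c \<in> hyperrect d x lo hi" "length c = d"
      using assms by (auto simp: hyperrect_def)
    then show "c \<in> translate v ` hyperrect d x lo hi"
      using translate_uminus[of v c] assms(1) by (metis image_eqI)
  qed
qed

lemma translate_cells:
  assumes "length v = d" "P \<subseteq> cells d"
  shows "translate v ` P \<subseteq> cells d"
  using assms by (auto simp: cells_def)

lemma stratum_translate:
  assumes "length v = d" "0 < d" "P \<subseteq> cells d"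
  shows "stratum (translate v ` P) (x + v ! 0) = translate v ` stratum P x"
  using assms by (force simp: stratum_def cells_def)

lemma width_translate:
  assumes "length v = d" "0 < d" "P \<subseteq> cells d"
  shows "width (translate v ` P) = width P"
proof -
  have "(\<lambda>c. c ! 0) ` translate v ` P = (\<lambda>x. x + v ! 0) ` (\<lambda>c. c ! 0) ` P"
    unfolding image_image using assms by (intro image_cong) (auto simp: cells_def)
  then show ?thesis
    unfolding width_def by (simp add: card_image)
qed

lemma lateral_area_translate:
  assumes "length v = d" "P \<subseteq> cells d"
  shows "lateral_area d (translate v ` P) = lateral_area d P"
  unfolding lateral_area_def
proof (rule sum.cong[OF refl])
  fix l assume l: "l \<in> {1..<d}"
  have "(\<lambda>c. (c ! 0, c ! l)) ` translate v ` P =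
      (\<lambda>(x, y). (x + v ! 0, y + v ! l)) ` (\<lambda>c. (c ! 0, c ! l)) ` P"
    unfolding image_image using assms l by (intro image_cong) (auto simp: cells_def subset_iff)
  moreover have "inj (\<lambda>(x, y). (x + v ! 0, y + v ! l))"
    by (auto simp: inj_def)
  ultimately show "card ((\<lambda>c. (c ! 0, c ! l)) ` translate v ` P) = card ((\<lambda>c. (c ! 0, c ! l)) ` P)"
    by (simp add: card_image inj_on_subset)
qed

lemma directed_plateau_translate:
  assumes "length v = d" "0 < d" "directed_plateau_polyhypercube d P"
  shows "directed_plateau_polyhypercube d (translate v ` P)"
proof -
  obtain r where r: "directed d r P" and P: "finite P" "P \<subseteq> cells d"
    using assms(3)
    by (auto simp: directed_plateau_polyhypercube_def directed_polyhypercube_def polyhypercube_def)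
  have "plateau d (x + v ! 0) (stratum (translate v ` P) (x + v ! 0))"
    if "x \<in> (\<lambda>c. c ! 0) ` P" for x
  proof -
    have "plateau d x (stratum P x)"
      using assms(3) that by (auto simp: directed_plateau_polyhypercube_def)
    then obtain lo hi where S: "stratum P x = hyperrect d x lo hi" "stratum P x \<noteq> {}"
      by (auto simp: plateau_iff_hyperrect)
    have "stratum (translate v ` P) (x + v ! 0) = translate v ` hyperrect d x lo hi"
      using S(1) by (simp add: stratum_translate[OF assms(1,2) P(2)])
    moreover have "translate v ` hyperrect d x lo hi \<noteq> {}"
      using S by simp
    ultimately show ?thesis
      unfolding plateau_iff_hyperrect hyperrect_translate[OF assms(1,2)] by blast
  qed
  moreover have "(\<lambda>c. c ! 0) ` translate v ` P = (\<lambda>x. x + v ! 0) ` (\<lambda>c. c ! 0) ` P"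
    unfolding image_image using assms(1,2) P(2) by (intro image_cong) (auto simp: cells_def)
  ultimately show ?thesis
    using directed_translate[OF assms(1) r] polyhypercube_if_directed translate_cells[OF assms(1) P(2)] P(1)
    by (auto simp: directed_plateau_polyhypercube_def directed_polyhypercube_def)
qed

lemma translate_eq_if_directed_from_origin:
  assumes "length v = d" "P \<subseteq> cells d"
    and "directed d (replicate d 0) P" "directed d (replicate d 0) (translate v ` P)"
  shows "translate v ` P = P"
proof -
  obtain c where c: "c \<in> P" "translate v c = replicate d 0"
    using assms(4) by (auto simp: directed_def)
  have "length c = d" using c(1) assms(2) by (auto simp: cells_def)
  have "v ! i = 0" if "i < d" for i
  proof -
    have "c ! i + v ! i = 0"
      using arg_cong[OF c(2), of "\<lambda>x. x ! i"] that assms(1) \<open>length c = d\<close> by simp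
    moreover have "0 \<le> c ! i"
      using nonneg_if_directed_from_origin[OF assms(3) c(1) that] .
    moreover have "0 \<le> translate v (replicate d 0) ! i"
      using nonneg_if_directed_from_origin[OF assms(4) _ that] assms(3) by (simp add: directed_def)
    ultimately show ?thesis
      using that assms(1) by simp
  qed
  then have "v = replicate d 0"
    using assms(1) by (simp add: list_eq_iff_nth_eq)
  then show ?thesis
    using assms(2) by (simp add: image_translate_replicate_zero)
qed

lemma transl_rel_Image_translate:
  assumes "length w = d" "P \<subseteq> cells d"
  shows "transl_rel d `` {translate w ` P} = transl_rel d `` {P}"
proof (intro set_eqI iffI)
  fix Q assume "Q \<in> transl_rel d `` {translate w ` P}"
  then obtain u where u: "length u = d" "Q = translate u ` translate w ` P"
    by (auto simp: transl_rel_def)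
  have "Q = translate (map2 (+) w u) ` P"
    unfolding u(2) image_image using assms u(1)
    by (intro image_cong) (auto simp: cells_def translate_translate)
  then show "Q \<in> transl_rel d `` {P}"
    using assms(1) u(1) by (auto simp: transl_rel_def intro!: exI[of _ "map2 (+) w u"])
next
  fix Q assume "Q \<in> transl_rel d `` {P}"
  then obtain u where u: "length u = d" "Q = translate u ` P"
    by (auto simp: transl_rel_def)
  let ?u' = "map2 (+) (map uminus w) u"
  have "Q = translate ?u' ` translate w ` P"
    unfolding u(2) image_image using assms u(1)
    by (intro image_cong) (auto simp: cells_def translate_translate intro!: nth_equalityI)
  then show "Q \<in> transl_rel d `` {translate w ` P}"
    using assms(1) u(1) by (auto simp: transl_rel_def intro!: exI[of _ ?u'])
qed

lemma self_in_transl_rel_Image: "P \<subseteq> cells d \<Longrightarrow> P \<in> transl_rel d `` {P}"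
  using image_translate_replicate_zero[of P d]
  by (auto simp: transl_rel_def intro!: exI[of _ "replicate d 0"])

lemma directed_from_origin_translate:
  assumes "directed d r P" "P \<subseteq> cells d"
  shows "directed d (replicate d 0) (translate (map uminus r) ` P)"
proof -
  have "length r = d"
    using assms by (auto simp: directed_def cells_def)
  then have "translate (map uminus r) r = replicate d 0"
    by (simp add: list_eq_iff_nth_eq)
  then show ?thesis
    using directed_translate[OF _ assms(1), of "map uminus r"] \<open>length r = d\<close> by simp
qed

lemma card_quotient_transl_rel:
  assumes cells: "\<And>P. P \<in> A \<Longrightarrow> P \<subseteq> cells d"
    and directed: "\<And>P. P \<in> A \<Longrightarrow> \<exists>r. directed d r P"
    and closed: "\<And>P v. P \<in> A \<Longrightarrow> length v = d \<Longrightarrow> translate v ` P \<in> A"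
  shows "card (A // transl_rel d) = card {P \<in> A. directed d (replicate d 0) P}"
proof -
  let ?R = "transl_rel d"
  let ?S = "{P \<in> A. directed d (replicate d 0) P}"
  have "inj_on (\<lambda>P. ?R `` {P}) ?S"
  proof (rule inj_onI)
    fix P Q assume P: "P \<in> ?S" and Q: "Q \<in> ?S" and "?R `` {P} = ?R `` {Q}"
    then have "Q \<in> ?R `` {P}"
      using self_in_transl_rel_Image cells by simp
    then obtain v where "length v = d" "Q = translate v ` P"
      by (auto simp: transl_rel_def)
    then show "P = Q"
      using translate_eq_if_directed_from_origin[of v d P] cells P Q by simp
  qed
  moreover have "A // ?R \<subseteq> (\<lambda>P. ?R `` {P}) ` ?S"
  proof
    fix X assume "X \<in> A // ?R"
    then obtain P where P: "P \<in> A" "X = ?R `` {P}"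
      by (auto elim: quotientE)
    obtain r where r: "directed d r P"
      using directed[OF P(1)] by blast
    then have "length (map uminus r) = d"
      using cells[OF P(1)] by (auto simp: directed_def cells_def)
    then have "translate (map uminus r) ` P \<in> ?S" "X = ?R `` {translate (map uminus r) ` P}"
      using directed_from_origin_translate[OF r cells[OF P(1)]] closed P transl_rel_Image_translate cells
      by simp_all
    then show "X \<in> (\<lambda>P. ?R `` {P}) ` ?S"
      by blast
  qed
  moreover have "(\<lambda>P. ?R `` {P}) ` ?S \<subseteq> A // ?R"
    by (auto intro: quotientI)
  ultimately have "bij_betw (\<lambda>P. ?R `` {P}) ?S (A // ?R)"
    by (auto simp: bij_betw_def)
  then show ?thesis
    by (simp add: bij_betw_same_card)
qed

lemma p_count_eq_card_directed_from_origin: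
  assumes "0 < d"
  shows "p_count d k n = card {P. directed_plateau_polyhypercube d P \<and> directed d (replicate d 0) P \<and>
    width P = k \<and> lateral_area d P = n}"
proof -
  let ?A = "{P. directed_plateau_polyhypercube d P \<and> width P = k \<and> lateral_area d P = n}"
  have cells: "P \<subseteq> cells d" and "\<exists>r. directed d r P" if "P \<in> ?A" for P
    using that by (auto simp: directed_plateau_polyhypercube_def directed_polyhypercube_def
        polyhypercube_def)
  moreover have "translate v ` P \<in> ?A" if "P \<in> ?A" "length v = d" for P v
    using that cells[OF that(1)] assms
    by (simp add: directed_plateau_translate width_translate lateral_area_translate)
  ultimately have "card (?A // transl_rel d) = card {P \<in> ?A. directed d (replicate d 0) P}"
    by (rule card_quotient_transl_rel)
  then show ?thesis
    unfolding p_count_def by (simp add: conj_ac)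
qed

section \<open>Column profiles\<close>

text \<open>The shifts of a column are stored at the odd indices of g, the overhangs at the even ones.\<close>

definition profile_lo :: "(nat \<Rightarrow> nat) \<Rightarrow> nat \<Rightarrow> int" where
  "profile_lo g j = int (\<Sum>i<j. g (2 * i + 1))"

definition profile_hi :: "(nat \<Rightarrow> nat) \<Rightarrow> nat \<Rightarrow> int" where
  "profile_hi g j = profile_lo g (Suc j) + int (g (2 * j))"

lemma profile_lo_0 [simp]: "profile_lo g 0 = 0"
  by (simp add: profile_lo_def)

lemma profile_lo_Suc: "profile_lo g (Suc j) = profile_lo g j + int (g (2 * j + 1))"
  by (simp add: profile_lo_def)

lemma profile_lo_le_hi: "profile_lo g j \<le> profile_hi g j"
  by (simp add: profile_hi_def profile_lo_Suc)

lemma card_profile_interval: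
  "card {profile_lo g j..profile_hi g j} = g (2 * j) + g (2 * j + 1) + 1"
proof -
  have "profile_hi g j - profile_lo g j + 1 = int (g (2 * j) + g (2 * j + 1) + 1)"
    by (simp add: profile_hi_def profile_lo_Suc)
  then show ?thesis
    by (simp only: card_atLeastAtMost_int nat_int)
qed

lemma profile_eqI:
  assumes "\<forall>i\<ge>2 * k - 1. g i = 0" "\<forall>i\<ge>2 * k - 1. g' i = 0"
    and "\<forall>j<k. profile_lo g j = profile_lo g' j \<and> profile_hi g j = profile_hi g' j"
  shows "g = g'"
proof
  fix i
  have lo: "profile_lo g j = profile_lo g' j" if "j \<le> k" for j
  proof (cases "j < k")
    case False
    with that assms(1,2) show ?thesis
      using assms(3) by (cases k) (auto simp: profile_lo_Suc)
  qed (use assms(3) in blast)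
  show "g i = g' i"
  proof (cases "i < 2 * k - 1")
    case False
    then show ?thesis using assms(1,2) by simp
  next
    case True
    define j where "j = i div 2"
    have "j < k" "i = 2 * j \<or> i = 2 * j + 1"
      using True unfolding j_def by presburger+
    then show ?thesis
      using lo[of j] lo[of "Suc j"] assms(3) True by (auto simp: profile_lo_Suc profile_hi_def)
  qed
qed

lemma profile_lo_telescope:
  assumes "lo 0 = 0" "\<And>j. j < m \<Longrightarrow> g (2 * j + 1) = nat (lo (Suc j) - lo j)"
    and "\<And>j. j < m \<Longrightarrow> lo j \<le> lo (Suc j)" "j \<le> m"
  shows "profile_lo g j = lo j"
  using assms(4)
proof (induction j)
  case 0
  then show ?case using assms(1) by simp
next
  case (Suc j)
  then show ?case using assms(2,3)[of j] by (simp add: profile_lo_Suc)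
qed

lemma profile_exists:
  assumes "0 < k" "lo 0 = 0" "lo (k - 1) \<le> hi (k - 1)"
    and "\<And>j. Suc j < k \<Longrightarrow> lo j \<le> lo (Suc j) \<and> lo (Suc j) \<le> hi j"
  shows "\<exists>g. (\<forall>i\<ge>2 * k - 1. g i = 0) \<and> (\<forall>j<k. profile_lo g j = lo j \<and> profile_hi g j = hi j)"
proof -
  \<comment> \<open>Freezing lo beyond k - 1 makes the last shift g (2k - 1) vanish.\<close>
  define lo' where "lo' j = lo (min j (k - 1))" for j
  define g where "g i = (if i < 2 * k - 1 then
      if even i then nat (hi (i div 2) - lo' (Suc (i div 2)))
      else nat (lo' (Suc (i div 2)) - lo' (i div 2)) else 0)" for i
  have lo'_chain: "lo' j \<le> lo' (Suc j) \<and> lo' (Suc j) \<le> hi j" if "j < k" for j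
  proof (cases "Suc j < k")
    case True
    then have "min j (k - 1) = j" "min (Suc j) (k - 1) = Suc j" by simp_all
    then show ?thesis using assms(4)[OF True] by (simp add: lo'_def)
  next
    case False
    then have "j = k - 1" using that by simp
    then show ?thesis using assms(3) by (simp add: lo'_def)
  qed
  have g_odd: "g (2 * j + 1) = nat (lo' (Suc j) - lo' j)" if "j < k" for j
  proof (cases "Suc j < k")
    case True
    then show ?thesis by (simp add: g_def)
  next
    case False
    then have "j = k - 1" "\<not> 2 * j + 1 < 2 * k - 1" using that by simp_all
    then show ?thesis by (simp add: g_def lo'_def)
  qed
  have g_even: "g (2 * j) = nat (hi j - lo' (Suc j))" if "j < k" for j
    using that by (auto simp: g_def)
  have lo_eq: "profile_lo g j = lo' j" if "j \<le> k" for j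
    using assms(2) g_odd lo'_chain that by (intro profile_lo_telescope) (simp_all add: lo'_def)
  have "profile_lo g j = lo j \<and> profile_hi g j = hi j" if "j < k" for j
    using that lo_eq[of j] lo_eq[of "Suc j"] g_even[of j] lo'_chain[of j]
    by (simp add: profile_hi_def lo'_def)
  moreover have "\<forall>i\<ge>2 * k - 1. g i = 0"
    by (simp add: g_def)
  ultimately show ?thesis by blast
qed

section \<open>Stacks of plateaus\<close>

definition stack_layer :: "nat \<Rightarrow> (nat \<times> nat \<Rightarrow> nat) \<Rightarrow> nat \<Rightarrow> int list set" where
  "stack_layer d f j =
     hyperrect d (int j) (\<lambda>l. profile_lo (curry f l) j) (\<lambda>l. profile_hi (curry f l) j)"

definition stack :: "nat \<Rightarrow> nat \<Rightarrow> (nat \<times> nat \<Rightarrow> nat) \<Rightarrow> int list set" where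
  "stack d k f = (\<Union>j<k. stack_layer d f j)"

lemma lower_corner_in_stack_layer:
  "0 < d \<Longrightarrow> mk_cell d (int j) (\<lambda>l. profile_lo (curry f l) j) \<in> stack_layer d f j"
  unfolding stack_layer_def by (rule mk_cell_in_hyperrect) (simp_all add: profile_lo_le_hi)

lemma stack_layer_nonempty: "0 < d \<Longrightarrow> stack_layer d f j \<noteq> {}"
  using lower_corner_in_stack_layer by blast

lemma stratum_stack: "j < k \<Longrightarrow> stratum (stack d k f) (int j) = stack_layer d f j"
  by (auto simp: stratum_def stack_def stack_layer_def hyperrect_def)

lemma abscissas_stack: "0 < d \<Longrightarrow> (\<lambda>c. c ! 0) ` stack d k f = int ` {..<k}"
  unfolding stack_def image_UN stack_layer_def
  using abscissas_hyperrect stack_layer_nonempty[unfolded stack_layer_def] by auto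

lemma width_stack: "0 < d \<Longrightarrow> width (stack d k f) = k"
  by (simp add: width_def abscissas_stack card_image)

lemma stack_layer_subset: "j < k \<Longrightarrow> stack_layer d f j \<subseteq> stack d k f"
  by (auto simp: stack_def)

lemma rtrancl_steps_from_lower_corner:
  assumes "0 < d" "j < k" "c \<in> stack_layer d f j"
  shows "(mk_cell d (int j) (\<lambda>l. profile_lo (curry f l) j), c) \<in> (steps d (stack d k f))\<^sup>*"
proof (rule rtrancl_steps_in_hyperrect[where x = "int j" and lo = "\<lambda>l. profile_lo (curry f l) j"
      and hi = "\<lambda>l. profile_hi (curry f l) j"])
  show "hyperrect d (int j) (\<lambda>l. profile_lo (curry f l) j) (\<lambda>l. profile_hi (curry f l) j)
      \<subseteq> stack d k f"
    using stack_layer_subset[OF assms(2), of d f] unfolding stack_layer_def .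
  show "mk_cell d (int j) (\<lambda>l. profile_lo (curry f l) j)
      \<in> hyperrect d (int j) (\<lambda>l. profile_lo (curry f l) j) (\<lambda>l. profile_hi (curry f l) j)"
    using lower_corner_in_stack_layer[OF assms(1), of j f] unfolding stack_layer_def .
  show "c \<in> hyperrect d (int j) (\<lambda>l. profile_lo (curry f l) j) (\<lambda>l. profile_hi (curry f l) j)"
    using assms(3) unfolding stack_layer_def .
  show "\<forall>i<d. mk_cell d (int j) (\<lambda>l. profile_lo (curry f l) j) ! i \<le> c ! i"
    using assms(3) by (auto simp: stack_layer_def hyperrect_def)
qed

lemma rtrancl_steps_to_lower_corner:
  assumes "0 < d" "j < k"
  shows "(replicate d 0, mk_cell d (int j) (\<lambda>l. profile_lo (curry f l) j)) \<in> (steps d (stack d k f))\<^sup>*"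
  using assms(2)
proof (induction j)
  case 0
  then show ?case by (simp add: mk_cell_origin[OF assms(1)])
next
  case (Suc j)
  let ?P = "stack d k f"
  let ?a = "mk_cell d (int j) (\<lambda>l. profile_lo (curry f l) (Suc j))"
  let ?corner = "mk_cell d (int (Suc j)) (\<lambda>l. profile_lo (curry f l) (Suc j))"
  \<comment> \<open>The lower corner of layer j + 1 lies one step along the first axis above a cell of layer j.\<close>
  have "?a \<in> stack_layer d f j"
    unfolding stack_layer_def using assms(1)
    by (intro mk_cell_in_hyperrect) (simp_all add: profile_lo_Suc profile_hi_def)
  then have "(replicate d 0, ?a) \<in> (steps d ?P)\<^sup>*"
    using Suc rtrancl_steps_from_lower_corner[OF assms(1)] by (meson Suc_lessD rtrancl_trans)
  moreover have "?a \<in> ?P" "?corner \<in> ?P"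
    using \<open>?a \<in> stack_layer d f j\<close> lower_corner_in_stack_layer[OF assms(1), of "Suc j" f]
      stack_layer_subset[of j k d f] stack_layer_subset[OF Suc.prems, of d f] Suc.prems by auto
  moreover have "elem_step d ?a ?corner"
    using elem_step_mk_cell[OF assms(1), of "int j"] by (simp add: add.commute)
  ultimately show ?case
    unfolding steps_def by (blast intro: rtrancl_into_rtrancl)
qed

lemma directed_stack:
  assumes "0 < d" "0 < k"
  shows "directed d (replicate d 0) (stack d k f)"
  unfolding directed_iff_steps
proof
  have "replicate d 0 \<in> stack_layer d f 0"
    using lower_corner_in_stack_layer[OF assms(1), of 0 f] by (simp add: mk_cell_origin[OF assms(1)])
  then show "replicate d 0 \<in> stack d k f"
    using stack_layer_subset[OF assms(2)] by blast
  show "\<forall>c\<in>stack d k f. (replicate d 0, c) \<in> (steps d (stack d k f))\<^sup>*"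
  proof
    fix c assume "c \<in> stack d k f"
    then obtain j where "j < k" "c \<in> stack_layer d f j"
      by (auto simp: stack_def)
    then show "(replicate d 0, c) \<in> (steps d (stack d k f))\<^sup>*"
      using rtrancl_steps_to_lower_corner[OF assms(1)] rtrancl_steps_from_lower_corner[OF assms(1)]
      by (blast intro: rtrancl_trans)
  qed
qed

lemma directed_plateau_stack:
  assumes "0 < d" "0 < k"
  shows "directed_plateau_polyhypercube d (stack d k f)"
  unfolding directed_plateau_polyhypercube_def directed_polyhypercube_def
proof (intro conjI ballI)
  have "finite (stack d k f)"
    by (simp add: stack_def stack_layer_def finite_hyperrect)
  moreover have "stack d k f \<subseteq> cells d"
    by (auto simp: stack_def stack_layer_def hyperrect_def cells_def)
  ultimately show "polyhypercube d (stack d k f)"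
    using polyhypercube_if_directed directed_stack[OF assms] by blast
  show "\<exists>r. directed d r (stack d k f)"
    using directed_stack[OF assms] by blast
  fix x assume "x \<in> (\<lambda>c. c ! 0) ` stack d k f"
  then obtain j where "j < k" "x = int j"
    using abscissas_stack[OF assms(1)] by auto
  then show "plateau d x (stratum (stack d k f) x)"
    using stack_layer_nonempty[OF assms(1)]
    by (auto simp: plateau_iff_hyperrect stratum_stack stack_layer_def)
qed

lemma lateral_area_stack:
  "lateral_area d (stack d k f) = (d - 1) * k + (\<Sum>l\<in>{1..<d}. \<Sum>i<2 * k. f (l, i))"
proof -
  have "card ((\<lambda>c. (c ! 0, c ! l)) ` stack d k f) = k + (\<Sum>i<2 * k. f (l, i))"
    if "1 \<le> l" "l < d" for l
  proof -
    have "(\<lambda>c. (c ! 0, c ! l)) ` stack d k f =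
        (\<Union>j<k. {int j} \<times> {profile_lo (curry f l) j..profile_hi (curry f l) j})"
      unfolding stack_def image_UN stack_layer_def
      using projection_hyperrect[OF that] stack_layer_nonempty[unfolded stack_layer_def] that
      by simp
    also have "card \<dots> = (\<Sum>j<k. card {profile_lo (curry f l) j..profile_hi (curry f l) j})"
      by (subst card_UN_disjoint)
        (auto simp del: card_atLeastAtMost_int simp: card_cartesian_product_singleton)
    also have "\<dots> = (\<Sum>j<k. f (l, 2 * j) + f (l, 2 * j + 1) + 1)"
      by (simp only: card_profile_interval curry_conv)
    also have "\<dots> = k + (\<Sum>i<2 * k. f (l, i))"
      by (induction k) (simp_all add: algebra_simps)
    finally show ?thesis .
  qed
  then show ?thesis
    unfolding lateral_area_def by (simp add: sum.distrib)
qed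

lemma stack_inj_on:
  assumes "0 < d"
  shows "inj_on (stack d k) {f. \<forall>x. x \<notin> {1..<d} \<times> {..<2 * k - 1} \<longrightarrow> f x = 0}"
proof (rule inj_onI)
  fix f f' :: "nat \<times> nat \<Rightarrow> nat"
  assume f: "f \<in> {f. \<forall>x. x \<notin> {1..<d} \<times> {..<2 * k - 1} \<longrightarrow> f x = 0}"
    and f': "f' \<in> {f. \<forall>x. x \<notin> {1..<d} \<times> {..<2 * k - 1} \<longrightarrow> f x = 0}"
    and eq: "stack d k f = stack d k f'"
  have inside: "curry f l = curry f' l" if l: "1 \<le> l" "l < d" for l
  proof (rule profile_eqI[of k])
    show "\<forall>i\<ge>2 * k - 1. curry f l i = 0" "\<forall>i\<ge>2 * k - 1. curry f' l i = 0"
      using f f' by auto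
    show "\<forall>j<k. profile_lo (curry f l) j = profile_lo (curry f' l) j \<and>
        profile_hi (curry f l) j = profile_hi (curry f' l) j"
    proof (intro allI impI)
      fix j assume "j < k"
      then have "stack_layer d f j = stack_layer d f' j"
        using stratum_stack[of j k d f] stratum_stack[of j k d f'] eq by simp
      then show "profile_lo (curry f l) j = profile_lo (curry f' l) j \<and>
          profile_hi (curry f l) j = profile_hi (curry f' l) j"
        using hyperrect_eq_bounds[OF assms _ _ l] stack_layer_nonempty[OF assms, of f j]
        unfolding stack_layer_def by blast
    qed
  qed
  have outside: "f (l, i) = f' (l, i)" if "\<not> (1 \<le> l \<and> l < d)" for l i
    using f f' that by auto
  show "f = f'"
  proof
    fix x :: "nat \<times> nat"
    show "f x = f' x"
    proof (cases x)
      case (Pair l i)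
      then show ?thesis
        using inside[of l] outside[of l i] by (cases "1 \<le> l \<and> l < d") (simp_all add: fun_eq_iff)
    qed
  qed
qed

lemma directed_plateau_eq_stack:
  assumes "0 < d" "directed_plateau_polyhypercube d P" "directed d (replicate d 0) P"
  obtains f where "\<forall>x. x \<notin> {1..<d} \<times> {..<2 * width P - 1} \<longrightarrow> f x = 0"
    and "P = stack d (width P) f"
proof -
  let ?k = "width P"
  obtain lo hi where union: "P = (\<Union>j<?k. hyperrect d (int j) (lo j) (hi j))"
    and lo_0: "\<And>l. 1 \<le> l \<Longrightarrow> l < d \<Longrightarrow> lo 0 l = 0"
    and le: "\<And>j l. j < ?k \<Longrightarrow> 1 \<le> l \<Longrightarrow> l < d \<Longrightarrow> lo j l \<le> hi j l"
    and chain: "\<And>j l. Suc j < ?k \<Longrightarrow> 1 \<le> l \<Longrightarrow> l < d \<Longrightarrow>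
      lo j l \<le> lo (Suc j) l \<and> lo (Suc j) l \<le> hi j l"
    using directed_plateau_strata[OF assms] by blast
  have "finite P"
    using assms(2)
    by (simp add: directed_plateau_polyhypercube_def directed_polyhypercube_def polyhypercube_def)
  then have "0 < ?k"
    using assms(3) unfolding width_def directed_def by (auto simp: card_gt_0_iff)
  define G where "G l = (SOME g. (\<forall>i\<ge>2 * ?k - 1. g i = 0) \<and>
      (\<forall>j<?k. profile_lo g j = lo j l \<and> profile_hi g j = hi j l))" for l
  have G: "(\<forall>i\<ge>2 * ?k - 1. G l i = 0) \<and>
      (\<forall>j<?k. profile_lo (G l) j = lo j l \<and> profile_hi (G l) j = hi j l)"
    if "1 \<le> l" "l < d" for l
  proof -
    have "\<exists>g. (\<forall>i\<ge>2 * ?k - 1. g i = 0) \<and>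
        (\<forall>j<?k. profile_lo g j = lo j l \<and> profile_hi g j = hi j l)"
      using \<open>0 < ?k\<close> that by (intro profile_exists) (simp_all add: lo_0 le chain)
    then show ?thesis
      unfolding G_def by (rule someI_ex)
  qed
  define f where "f = (\<lambda>(l, i). if 1 \<le> l \<and> l < d then G l i else 0)"
  have "\<forall>x. x \<notin> {1..<d} \<times> {..<2 * ?k - 1} \<longrightarrow> f x = 0"
    using G by (auto simp: f_def)
  moreover have "stack_layer d f j = hyperrect d (int j) (lo j) (hi j)" if "j < ?k" for j
    unfolding stack_layer_def using G that by (intro hyperrect_cong) (simp add: f_def curry_def)
  then have "(\<Union>j<?k. hyperrect d (int j) (lo j) (hi j)) = stack d ?k f"
    by (simp add: stack_def)
  with union have "P = stack d ?k f"
    by (rule trans)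
  ultimately show thesis
    by (rule that)
qed

lemma bij_betw_stack_weak_compositions:
  assumes "0 < d" "0 < k"
  shows "bij_betw (stack d k) (weak_compositions ({1..<d} \<times> {..<2 * k - 1}) N)
    {P. directed_plateau_polyhypercube d P \<and> directed d (replicate d 0) P \<and>
        width P = k \<and> lateral_area d P = (d - 1) * k + N}"
    (is "bij_betw _ (weak_compositions ?I N) ?S")
proof -
  have area: "lateral_area d (stack d k f) = (d - 1) * k + sum f ?I"
    if "\<forall>x. x \<notin> ?I \<longrightarrow> f x = 0" for f
  proof -
    have "(\<Sum>l\<in>{1..<d}. \<Sum>i<2 * k. f (l, i)) = (\<Sum>l\<in>{1..<d}. \<Sum>i<2 * k - 1. f (l, i))"
      using that by (intro sum.cong refl sum.mono_neutral_right) auto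
    then show ?thesis
      by (simp add: lateral_area_stack sum.cartesian_product)
  qed
  have "inj_on (stack d k) (weak_compositions ?I N)"
    using stack_inj_on[OF assms(1)] by (rule inj_on_subset) (auto simp: weak_compositions_def)
  moreover have "stack d k ` weak_compositions ?I N \<subseteq> ?S"
    using area directed_plateau_stack[OF assms] directed_stack[OF assms] width_stack[OF assms(1)]
    by (auto simp: weak_compositions_def)
  moreover have "?S \<subseteq> stack d k ` weak_compositions ?I N"
  proof
    fix P assume P: "P \<in> ?S"
    then obtain f where f: "\<forall>x. x \<notin> ?I \<longrightarrow> f x = 0" "P = stack d k f"
      using directed_plateau_eq_stack[OF assms(1)] by auto
    then have "f \<in> weak_compositions ?I N"
      using P area by (auto simp: weak_compositions_def)
    with f(2) show "P \<in> stack d k ` weak_compositions ?I N"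
      by blast
  qed
  ultimately show ?thesis
    unfolding bij_betw_def by blast
qed

theorem theorem3:
  fixes d k n :: nat
  assumes "d \<ge> 3" and "k \<ge> 1" and "n \<ge> (d - 1) * k"
  shows "p_count d k n = ((n + (d - 1) * k - d) choose (n - (d - 1) * k))"
proof -
  \<comment> \<open>The hypothesis 3 \<le> d is only used as 0 < d.\<close>
  have d: "0 < d" and k: "0 < k" using assms(1,2) by auto
  define N where "N = n - (d - 1) * k"
  have "n = (d - 1) * k + N"
    using assms(3) by (simp add: N_def)
  then have "p_count d k n = card (weak_compositions ({1..<d} \<times> {..<2 * k - 1}) N)"
    using p_count_eq_card_directed_from_origin[OF d]
      bij_betw_same_card[OF bij_betw_stack_weak_compositions[OF d k]] by simp
  also have "\<dots> = (N + (d - 1) * (2 * k - 1) - 1) choose N"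
    by (simp add: card_weak_compositions)
  also have "N + (d - 1) * (2 * k - 1) - 1 = n + (d - 1) * k - d"
  proof -
    define p where "p = (d - 1) * k"
    have "(d - 1) * (2 * k - 1) = 2 * p - (d - 1)" "d - 1 \<le> p"
      using k unfolding p_def by (simp_all add: right_diff_distrib')
    then show ?thesis
      using d assms(3) unfolding N_def p_def[symmetric] by linarith
  qed
  finally show ?thesis
    by (simp add: N_def)
qed

end
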